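(* Let $n\ge1$, $\gamma=(\gamma_1,\dots,\gamma_n)$ with $\gamma_i>0$, let $k\in\{-1,-3,-5,\dots\}$, and let $f$ be B-polyharmonic of order $\frac{1-k}{2}$ and even with respect to each variable. Then one of the solutions of the Cauchy problem $$(B_k)_tu=(\Delta_\gamma)_xu,\ x\in\mathbb{R}^n_+,\ t>0,\qquad u(x,0;k)=f(x),\quad u_t(x,0;k)=0$$ is given by $u(x,t;-1)=f(x)$ for $k=-1$, and for $k=-3,-5,\dots$ by $$u(x,t;k)=f(x)+\sum_{h=1}^{-\frac{k+1}{2}}\frac{\Delta_\gamma^h f}{(k+1)(k+3)\cdots(k+2h-1)}\,\frac{t^{2h}}{2\cdot4\cdots 2h}.$$
   Context: $\mathbb{R}^n_+=\{x\in\mathbb{R}^n:x_i>0\ \forall i\}$. $(B_\nu)_t=\partial_t^2+\frac{\nu}{t}\partial_t$; $\Delta_\gamma=(\Delta_\gamma)_x=\sum_{i=1}^n\big(\partial_{x_i}^2+\frac{\gamma_i}{x_i}\partial_{x_i}\big)$. $C^m_{ev}$: functions on $\mathbb{R}^n_+$, $m$ times differentiable, with all derivatives continuous up to $x_i=0$, and $\frac{\partial^{2j+1}f}{\partial x_i^{2j+1}}=0$ at $x_i=0$ for all $i$ and integers $j\ge0$ with $2j+1\le m$. A function $f$ is B-polyharmonic of order $p$ if $f\in C^{2p}_{ev}$ and $\Delta_\gamma^p f=0$. *)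

theory Defs
  imports "HOL-Analysis.Analysis"
begin

text \<open>Points of R^n are vectors real^'n (the finite index type 'n has CARD('n) = n >= 1 elements).\<close>

definition Rplus :: "(real^'n) set" where
  "Rplus = {x. \<forall>i. x $ i > 0}"

definition Rplus_cl :: "(real^'n) set" where
  "Rplus_cl = {x. \<forall>i. x $ i \<ge> 0}"

definition upd :: "real^'n \<Rightarrow> 'n \<Rightarrow> real \<Rightarrow> real^'n" where
  "upd x i s = (\<chi> j. if j = i then s else x $ j)"

definition partial :: "'n \<Rightarrow> (real^'n \<Rightarrow> real) \<Rightarrow> real^'n \<Rightarrow> real" where
  "partial i g x = deriv (\<lambda>s. g (upd x i s)) (x $ i)"

fun dlist :: "'n list \<Rightarrow> (real^'n \<Rightarrow> real) \<Rightarrow> real^'n \<Rightarrow> real" where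
  "dlist [] g = g"
| "dlist (i # is) g = partial i (dlist is g)"

definition Cev :: "nat \<Rightarrow> (real^'n \<Rightarrow> real) \<Rightarrow> bool" where
  "Cev m g \<longleftrightarrow>
     (\<forall>is i x. length is < m \<longrightarrow> x \<in> Rplus \<longrightarrow>
        (\<lambda>s. dlist is g (upd x i s)) differentiable (at (x $ i))) \<and>
     (\<forall>is. length is \<le> m \<longrightarrow>
        continuous_on Rplus (dlist is g) \<and>
        (\<exists>h. continuous_on Rplus_cl h \<and> (\<forall>x\<in>Rplus. h x = dlist is g x))) \<and>
     (\<forall>i j x. 2 * j + 1 \<le> m \<longrightarrow> x \<in> Rplus_cl \<longrightarrow> x $ i = 0 \<longrightarrow>
        (dlist (replicate (2 * j + 1) i) g \<longlongrightarrow> 0) (at x within Rplus))"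

definition Lap :: "real^'n \<Rightarrow> (real^'n \<Rightarrow> real) \<Rightarrow> real^'n \<Rightarrow> real" where
  "Lap \<gamma> g x = (\<Sum>i\<in>UNIV. partial i (partial i g) x + \<gamma> $ i / x $ i * partial i g x)"

definition Bpolyharmonic :: "real^'n \<Rightarrow> nat \<Rightarrow> (real^'n \<Rightarrow> real) \<Rightarrow> bool" where
  "Bpolyharmonic \<gamma> p g \<longleftrightarrow> Cev (2 * p) g \<and> (\<forall>x\<in>Rplus. (Lap \<gamma> ^^ p) g x = 0)"

definition Bess :: "real \<Rightarrow> (real \<Rightarrow> real) \<Rightarrow> real \<Rightarrow> real" where
  "Bess \<nu> v t = deriv (deriv v) t + \<nu> / t * deriv v t"

text \<open>the candidate solution u(x,t;k); for k = -1 the sum is empty and u = f\<close>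
definition ucand :: "real^'n \<Rightarrow> int \<Rightarrow> (real^'n \<Rightarrow> real) \<Rightarrow> real^'n \<Rightarrow> real \<Rightarrow> real" where
  "ucand \<gamma> k f x t = f x +
     (\<Sum>h = 1..nat (- (k + 1) div 2).
        (Lap \<gamma> ^^ h) f x / (\<Prod>l = 1..h. of_int (k + 2 * int l - 1))
          * t ^ (2 * h) / (\<Prod>l = 1..h. 2 * real l))"

definition solves_Cauchy :: "real^'n \<Rightarrow> int \<Rightarrow> (real^'n \<Rightarrow> real) \<Rightarrow> (real^'n \<Rightarrow> real \<Rightarrow> real) \<Rightarrow> bool" where
  "solves_Cauchy \<gamma> k f v \<longleftrightarrow>
     (\<forall>x\<in>Rplus. \<forall>t>0.
        (\<lambda>s. v x s) differentiable (at t) \<and>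
        deriv (\<lambda>s. v x s) differentiable (at t) \<and>
        (\<forall>i. (\<lambda>s. v (upd x i s) t) differentiable (at (x $ i)) \<and>
             (\<lambda>s. partial i (\<lambda>y. v y t) (upd x i s)) differentiable (at (x $ i))) \<and>
        Bess (of_int k) (\<lambda>s. v x s) t = Lap \<gamma> (\<lambda>y. v y t) x) \<and>
     (\<forall>x\<in>Rplus. v x 0 = f x \<and> ((\<lambda>s. v x s) has_real_derivative 0) (at 0 within {0..}))"

end

theory Submission
  imports Defs
begin

text \<open>Put N = -(k+1)/2 and b(h) = 1 / ((k+1)(k+3)...(k+2h-1) * 2*4*...*2h), so that
  the candidate is the even polynomial u = sum_{h<=N} b(h) t^(2h) Lap^h f in t. The Bessel operator
  maps t^(2h) to 2h (2h-1+k) t^(2h-2), and the coefficients satisfy b(h+1) * 2(h+1) * (2h+1+k) = b(h),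
  so (B_k)_t u = sum_{h<N} b(h) t^(2h) Lap^(h+1) f. As Lap^(N+1) f = 0 by polyharmonicity, this is
  Lap u by linearity of Lap. The factors 2h+1+k with h < N never vanish since k + 2N = -1.\<close>

lemma upd_nth [simp]: "upd x i s $ j = (if j = i then s else x $ j)"
  by (simp add: upd_def)

lemma upd_same [simp]: "upd x i (x $ i) = x"
  by (simp add: upd_def vec_eq_iff)

lemma eventually_upd_in_Rplus:
  assumes "x \<in> Rplus"
  shows "eventually (\<lambda>s. upd x i s \<in> Rplus) (nhds (x $ i))"
proof -
  have "eventually (\<lambda>s. s > 0) (nhds (x $ i))"
    using assms eventually_nhds_in_open[of "{0<..}" "x $ i"] by (auto simp: Rplus_def)
  then show ?thesis
    by eventually_elim (use assms in \<open>auto simp: Rplus_def\<close>)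
qed

lemma eventually_upd_eq_on_Rplus:
  fixes g h :: "real^'n \<Rightarrow> real"
  assumes "x \<in> Rplus" "\<forall>y\<in>Rplus. g y = h y"
  shows "eventually (\<lambda>s. g (upd x i s) = h (upd x i s)) (nhds (x $ i))"
  using eventually_upd_in_Rplus[OF assms(1), of i] by eventually_elim (use assms in auto)

lemma partial_cong_Rplus:
  fixes g h :: "real^'n \<Rightarrow> real"
  assumes "x \<in> Rplus" "\<forall>y\<in>Rplus. g y = h y"
  shows "partial i g x = partial i h x"
  unfolding partial_def by (rule deriv_cong_ev[OF eventually_upd_eq_on_Rplus[OF assms]]) simp

lemma differentiable_upd_cong_Rplus:
  fixes g h :: "real^'n \<Rightarrow> real"
  assumes "x \<in> Rplus" "\<forall>y\<in>Rplus. g y = h y"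
    and "(\<lambda>s. g (upd x i s)) differentiable (at (x $ i))"
  shows "(\<lambda>s. h (upd x i s)) differentiable (at (x $ i))"
proof -
  obtain D where "DERIV (\<lambda>s. g (upd x i s)) (x $ i) :> D"
    using assms(3) real_differentiable_def by blast
  then have "DERIV (\<lambda>s. h (upd x i s)) (x $ i) :> D"
    using DERIV_cong_ev[OF refl eventually_upd_eq_on_Rplus[OF assms(1,2)] refl] by blast
  then show ?thesis
    using real_differentiable_def by blast
qed

lemma partial_const: "partial i (\<lambda>y. c) x = 0"
  unfolding partial_def by (rule DERIV_imp_deriv) (rule DERIV_const)

lemma partial_add:
  fixes g h :: "real^'n \<Rightarrow> real"
  assumes "(\<lambda>s. g (upd x i s)) differentiable (at (x $ i))"
    and "(\<lambda>s. h (upd x i s)) differentiable (at (x $ i))"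
  shows "partial i (\<lambda>y. g y + h y) x = partial i g x + partial i h x"
  using assms unfolding partial_def DERIV_deriv_iff_real_differentiable[symmetric]
  by (intro DERIV_imp_deriv DERIV_add)

lemma partial_mult:
  fixes g h :: "real^'n \<Rightarrow> real"
  assumes "(\<lambda>s. g (upd x i s)) differentiable (at (x $ i))"
    and "(\<lambda>s. h (upd x i s)) differentiable (at (x $ i))"
  shows "partial i (\<lambda>y. g y * h y) x = partial i g x * h x + g x * partial i h x"
proof -
  have "DERIV (\<lambda>s. g (upd x i s) * h (upd x i s)) (x $ i) :> partial i g x * h x + g x * partial i h x"
    using DERIV_mult[OF assms[unfolded DERIV_deriv_iff_real_differentiable[symmetric]]]
    by (simp add: partial_def mult.commute)
  then show ?thesis
    unfolding partial_def by (rule DERIV_imp_deriv)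
qed

lemma partial_sum:
  fixes g :: "'a \<Rightarrow> real^'n \<Rightarrow> real"
  assumes "finite A" "\<forall>a\<in>A. (\<lambda>s. g a (upd x i s)) differentiable (at (x $ i))"
  shows "partial i (\<lambda>y. \<Sum>a\<in>A. c a * g a y) x = (\<Sum>a\<in>A. c a * partial i (g a) x)"
  using assms unfolding partial_def DERIV_deriv_iff_real_differentiable[symmetric]
  by (intro DERIV_imp_deriv DERIV_sum DERIV_cmult) simp_all

text \<open>m-fold differentiability along coordinate lines in the open orthant; weaker than
  C^m, and all that the calculus of \<^const>\<open>partial\<close> and \<^const>\<open>Lap\<close> below needs.\<close>

fun partially_differentiable :: "nat \<Rightarrow> (real^'n \<Rightarrow> real) \<Rightarrow> bool" where
  "partially_differentiable 0 g = True"
| "partially_differentiable (Suc m) g \<longleftrightarrow>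
     (\<forall>i. \<forall>x\<in>Rplus. (\<lambda>s. g (upd x i s)) differentiable (at (x $ i))) \<and>
     (\<forall>i. partially_differentiable m (partial i g))"

lemma partially_differentiable_cong_Rplus:
  fixes g h :: "real^'n \<Rightarrow> real"
  shows "partially_differentiable m g \<Longrightarrow> \<forall>y\<in>Rplus. g y = h y \<Longrightarrow> partially_differentiable m h"
proof (induction m arbitrary: g h)
  case 0
  then show ?case by simp
next
  case (Suc m)
  have "partially_differentiable m (partial i h)" for i
  proof (rule Suc.IH)
    show "partially_differentiable m (partial i g)" using Suc.prems(1) by simp
    show "\<forall>y\<in>Rplus. partial i g y = partial i h y"
      using Suc.prems(2) partial_cong_Rplus by blast
  qed
  moreover have "(\<lambda>s. h (upd x i s)) differentiable (at (x $ i))" if "x \<in> Rplus" for i x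
    using differentiable_upd_cong_Rplus[of x g h i] Suc.prems that by simp
  ultimately show ?case by simp
qed

lemma partially_differentiable_Suc_imp:
  "partially_differentiable (Suc m) g \<Longrightarrow> partially_differentiable m g"
  by (induction m arbitrary: g) auto

lemma partially_differentiable_le:
  "m \<le> n \<Longrightarrow> partially_differentiable n g \<Longrightarrow> partially_differentiable m g"
  by (induction n rule: dec_induct) (use partially_differentiable_Suc_imp in blast)+

lemma partially_differentiable_const: "partially_differentiable m (\<lambda>y::real^'n. c)"
proof (induction m arbitrary: c)
  case 0
  then show ?case by simp
next
  case (Suc m)
  have "partial i (\<lambda>y::real^'n. c) = (\<lambda>y. 0)" for i
    by (rule ext) (rule partial_const)
  then show ?case
    using Suc.IH by (simp del: partially_differentiable.simps(1))
qed

lemma partially_differentiable_add: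
  fixes g h :: "real^'n \<Rightarrow> real"
  shows "partially_differentiable m g \<Longrightarrow> partially_differentiable m h \<Longrightarrow>
    partially_differentiable m (\<lambda>y. g y + h y)"
proof (induction m arbitrary: g h)
  case 0
  then show ?case by simp
next
  case (Suc m)
  then have gd: "\<forall>i. \<forall>x\<in>Rplus. (\<lambda>s. g (upd x i s)) differentiable (at (x $ i))"
    and hd: "\<forall>i. \<forall>x\<in>Rplus. (\<lambda>s. h (upd x i s)) differentiable (at (x $ i))"
    by simp_all
  have "partially_differentiable m (partial i (\<lambda>y. g y + h y))" for i
  proof (rule partially_differentiable_cong_Rplus)
    show "partially_differentiable m (\<lambda>y. partial i g y + partial i h y)"
      using Suc.IH Suc.prems by simp
    show "\<forall>y\<in>Rplus. partial i g y + partial i h y = partial i (\<lambda>y. g y + h y) y"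
      using partial_add[of g _ i h] gd hd by simp
  qed
  moreover have "\<forall>x\<in>Rplus. (\<lambda>s. g (upd x i s) + h (upd x i s)) differentiable (at (x $ i))" for i
    using gd hd by (auto intro: differentiable_add)
  ultimately show ?case by simp
qed

lemma partially_differentiable_mult:
  fixes g h :: "real^'n \<Rightarrow> real"
  shows "partially_differentiable m g \<Longrightarrow> partially_differentiable m h \<Longrightarrow>
    partially_differentiable m (\<lambda>y. g y * h y)"
proof (induction m arbitrary: g h)
  case 0
  then show ?case by simp
next
  case (Suc m)
  then have gd: "\<forall>i. \<forall>x\<in>Rplus. (\<lambda>s. g (upd x i s)) differentiable (at (x $ i))"
    and hd: "\<forall>i. \<forall>x\<in>Rplus. (\<lambda>s. h (upd x i s)) differentiable (at (x $ i))"
    by simp_all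
  have g: "partially_differentiable m g" and h: "partially_differentiable m h"
    using Suc.prems partially_differentiable_Suc_imp by blast+
  have "partially_differentiable m (partial i (\<lambda>y. g y * h y))" for i
  proof (rule partially_differentiable_cong_Rplus)
    show "partially_differentiable m (\<lambda>y. partial i g y * h y + g y * partial i h y)"
      using Suc.IH Suc.prems g h by (simp add: partially_differentiable_add)
    show "\<forall>y\<in>Rplus. partial i g y * h y + g y * partial i h y = partial i (\<lambda>y. g y * h y) y"
      using partial_mult[of g _ i h] gd hd by simp
  qed
  moreover have "\<forall>x\<in>Rplus. (\<lambda>s. g (upd x i s) * h (upd x i s)) differentiable (at (x $ i))" for i
    using gd hd by (auto intro: differentiable_mult)
  ultimately show ?case by simp
qed

lemma partially_differentiable_sum:
  fixes g :: "'a \<Rightarrow> real^'n \<Rightarrow> real"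
  shows "finite A \<Longrightarrow> (\<forall>a\<in>A. partially_differentiable m (g a)) \<Longrightarrow>
    partially_differentiable m (\<lambda>y. \<Sum>a\<in>A. g a y)"
proof (induction A rule: finite_induct)
  case empty
  then show ?case using partially_differentiable_const[of m 0] by simp
next
  case (insert a A)
  then show ?case using partially_differentiable_add[of m "g a"] by simp
qed

lemma DERIV_inverse_power:
  assumes "s > 0"
  shows "DERIV (\<lambda>s::real. c * inverse s ^ e) s :> (- c * real e) * inverse s ^ Suc e"
proof -
  have "DERIV (\<lambda>s::real. c * inverse s ^ e) s :> c * (real e * inverse s ^ (e - 1) * (- (inverse s * inverse s)))"
    using assms by (auto intro!: derivative_eq_intros)
  moreover have "c * (real e * inverse s ^ (e - 1) * (- (inverse s * inverse s))) = (- c * real e) * inverse s ^ Suc e"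
    using assms by (cases e) (simp_all add: field_simps)
  ultimately show ?thesis by metis
qed

lemma partially_differentiable_inverse_power:
  "partially_differentiable m (\<lambda>y::real^'n. c * inverse (y $ j) ^ e)"
proof (induction m arbitrary: c e)
  case 0
  then show ?case by simp
next
  case (Suc m)
  have line_j: "(\<lambda>s. c * inverse (upd x j s $ j) ^ e) = (\<lambda>s. c * inverse s ^ e)" for x :: "real^'n"
    by (simp add: fun_eq_iff)
  have line_other: "(\<lambda>s. c * inverse (upd x i s $ j) ^ e) = (\<lambda>s. c * inverse (x $ j) ^ e)"
    if "i \<noteq> j" for i and x :: "real^'n"
    using that by (simp add: fun_eq_iff)
  have "(\<lambda>s. c * inverse (upd x i s $ j) ^ e) differentiable (at (x $ i))"
    if "x \<in> Rplus" for i x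
  proof (cases "i = j")
    case True
    then have "x $ i > 0" using that by (simp add: Rplus_def)
    with True show ?thesis
      using line_j DERIV_inverse_power[of "x $ i" c e] real_differentiable_def by metis
  qed (simp add: line_other)
  moreover have "partially_differentiable m (partial i (\<lambda>y. c * inverse (y $ j) ^ e))" for i
  proof (cases "i = j")
    case True
    show ?thesis
    proof (rule partially_differentiable_cong_Rplus)
      show "partially_differentiable m (\<lambda>y::real^'n. (- c * real e) * inverse (y $ j) ^ Suc e)"
        by (rule Suc.IH)
      show "\<forall>y\<in>Rplus. (- c * real e) * inverse (y $ j) ^ Suc e = partial i (\<lambda>y. c * inverse (y $ j) ^ e) y"
        using True line_j DERIV_imp_deriv[OF DERIV_inverse_power]
        by (simp add: partial_def Rplus_def)
    qed
  next
    case False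
    then have "partial i (\<lambda>y::real^'n. c * inverse (y $ j) ^ e) = (\<lambda>y. 0)"
      by (simp add: fun_eq_iff partial_def line_other)
    then show ?thesis using partially_differentiable_const by simp
  qed
  ultimately show ?case by simp
qed

lemma partially_differentiable_Lap:
  fixes g :: "real^'n \<Rightarrow> real"
  assumes "partially_differentiable (Suc (Suc m)) g"
  shows "partially_differentiable m (Lap \<gamma> g)"
proof -
  have "Lap \<gamma> g = (\<lambda>x. \<Sum>i\<in>UNIV. partial i (partial i g) x + (\<gamma> $ i * inverse (x $ i) ^ 1) * partial i g x)"
    by (simp add: fun_eq_iff Lap_def divide_inverse)
  moreover have "partially_differentiable m
      (\<lambda>x. partial i (partial i g) x + (\<gamma> $ i * inverse (x $ i) ^ 1) * partial i g x)" for i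
    using assms partially_differentiable_Suc_imp[of m "partial i g"]
    by (intro partially_differentiable_add partially_differentiable_mult
        partially_differentiable_inverse_power) simp_all
  ultimately show ?thesis
    by (simp add: partially_differentiable_sum)
qed

lemma partially_differentiable_Lap_power:
  fixes f :: "real^'n \<Rightarrow> real"
  assumes "partially_differentiable (2 * p) f" "h \<le> p"
  shows "partially_differentiable (2 * (p - h)) ((Lap \<gamma> ^^ h) f)"
  using assms(2)
proof (induction h)
  case 0
  then show ?case using assms(1) by simp
next
  case (Suc h)
  have "2 * (p - h) = Suc (Suc (2 * (p - Suc h)))" using Suc.prems by simp
  then show ?case
    using Suc partially_differentiable_Lap[of "2 * (p - Suc h)" "(Lap \<gamma> ^^ h) f" \<gamma>] by simp
qed

lemma Cev_imp_partially_differentiable: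
  fixes f :: "real^'n \<Rightarrow> real"
  assumes "Cev m f"
  shows "length is + j \<le> m \<Longrightarrow> partially_differentiable j (dlist is f)"
proof (induction j arbitrary: "is")
  case 0
  then show ?case by simp
next
  case (Suc j)
  have "\<forall>i x. length is < m \<longrightarrow> x \<in> Rplus \<longrightarrow> (\<lambda>s. dlist is f (upd x i s)) differentiable (at (x $ i))"
    using assms unfolding Cev_def by blast
  moreover have "partially_differentiable j (dlist (i # is) f)" for i
    using Suc.IH[of "i # is"] Suc.prems by simp
  ultimately show ?case using Suc.prems by simp
qed

lemma Lap_sum:
  fixes g :: "'a \<Rightarrow> real^'n \<Rightarrow> real"
  assumes A: "finite A" and D: "\<forall>a\<in>A. partially_differentiable 2 (g a)" and x: "x \<in> Rplus"
  shows "Lap \<gamma> (\<lambda>y. \<Sum>a\<in>A. c a * g a y) x = (\<Sum>a\<in>A. c a * Lap \<gamma> (g a) x)"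
proof -
  have d1: "\<forall>a\<in>A. (\<lambda>s. g a (upd y i s)) differentiable (at (y $ i))"
    and d2: "\<forall>a\<in>A. (\<lambda>s. partial i (g a) (upd y i s)) differentiable (at (y $ i))"
    if "y \<in> Rplus" for y i
    using D that by (simp_all add: numeral_2_eq_2)
  have p1: "partial i (\<lambda>y. \<Sum>a\<in>A. c a * g a y) y = (\<Sum>a\<in>A. c a * partial i (g a) y)"
    if "y \<in> Rplus" for y i
    using partial_sum[OF A d1[OF that]] .
  have p2: "partial i (partial i (\<lambda>y. \<Sum>a\<in>A. c a * g a y)) x
      = (\<Sum>a\<in>A. c a * partial i (partial i (g a)) x)" for i
  proof -
    have "partial i (partial i (\<lambda>y. \<Sum>a\<in>A. c a * g a y)) x
        = partial i (\<lambda>y. \<Sum>a\<in>A. c a * partial i (g a) y) x"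
      by (rule partial_cong_Rplus[OF x]) (use p1 in auto)
    also have "\<dots> = (\<Sum>a\<in>A. c a * partial i (partial i (g a)) x)"
      by (rule partial_sum[OF A d2[OF x]])
    finally show ?thesis .
  qed
  have "Lap \<gamma> (\<lambda>y. \<Sum>a\<in>A. c a * g a y) x =
      (\<Sum>i\<in>UNIV. \<Sum>a\<in>A. c a * (partial i (partial i (g a)) x + \<gamma> $ i / x $ i * partial i (g a) x))"
    unfolding Lap_def p1[OF x] p2 by (simp add: sum.distrib sum_distrib_left algebra_simps)
  also have "\<dots> = (\<Sum>a\<in>A. c a * Lap \<gamma> (g a) x)"
    by (subst sum.swap) (simp add: Lap_def sum_distrib_left)
  finally show ?thesis .
qed

lemma DERIV_power_sum:
  "((\<lambda>s. \<Sum>h\<in>A. C h * s ^ e h) has_real_derivative (\<Sum>h\<in>A. C h * real (e h) * s ^ (e h - 1))) (at s)"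
  by (rule DERIV_sum) (use DERIV_cmult[OF DERIV_pow] in \<open>simp add: mult.assoc\<close>)

lemma deriv_power_sum:
  "deriv (\<lambda>s. \<Sum>h\<in>A. C h * s ^ e h) = (\<lambda>s. \<Sum>h\<in>A. C h * real (e h) * s ^ (e h - 1))"
  by (rule ext, rule DERIV_imp_deriv, rule DERIV_power_sum)

lemma Bess_even_power_sum:
  fixes c :: "nat \<Rightarrow> real"
  assumes "t > 0"
  shows "Bess \<nu> (\<lambda>s. \<Sum>h\<le>N. c h * s ^ (2 * h)) t
    = (\<Sum>j<N. c (Suc j) * (2 * real (Suc j)) * (2 * real j + 1 + \<nu>) * t ^ (2 * j))"
proof -
  define T where
    "T h = c h * real (2 * h) * (real (2 * h - 1) * t ^ (2 * h - 1 - 1) + \<nu> / t * t ^ (2 * h - 1))" for h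
  have T_Suc: "T (Suc j) = c (Suc j) * (2 * real (Suc j)) * (2 * real j + 1 + \<nu>) * t ^ (2 * j)" for j
  proof -
    have "2 * Suc j - 1 = Suc (2 * j)" "2 * Suc j - 1 - 1 = 2 * j" by simp_all
    moreover have "\<nu> / t * t ^ Suc (2 * j) = \<nu> * t ^ (2 * j)" using assms by simp
    ultimately show ?thesis unfolding T_def by (simp add: algebra_simps)
  qed
  have "Bess \<nu> (\<lambda>s. \<Sum>h\<le>N. c h * s ^ (2 * h)) t = (\<Sum>h\<le>N. T h)"
    unfolding Bess_def deriv_power_sum T_def
    by (simp add: sum_distrib_left sum.distrib algebra_simps)
  also have "\<dots> = T 0 + (\<Sum>j<N. T (Suc j))"
    by (rule sum.atMost_shift)
  also have "T 0 = 0"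
    by (simp add: T_def)
  finally show ?thesis
    by (simp add: T_Suc)
qed

definition Bessel_coeff :: "int \<Rightarrow> nat \<Rightarrow> real" where
  "Bessel_coeff k h = inverse ((\<Prod>l = 1..h. of_int (k + 2 * int l - 1)) * (\<Prod>l = 1..h. 2 * real l))"

lemma Bessel_coeff_0 [simp]: "Bessel_coeff k 0 = 1"
  by (simp add: Bessel_coeff_def)

lemma Bessel_coeff_Suc:
  assumes "2 * real j + 1 + of_int k \<noteq> 0"
  shows "Bessel_coeff k (Suc j) * (2 * real (Suc j)) * (2 * real j + 1 + of_int k) = Bessel_coeff k j"
proof -
  have P: "(\<Prod>l = 1..Suc j. of_int (k + 2 * int l - 1) :: real)
      = (\<Prod>l = 1..j. of_int (k + 2 * int l - 1)) * (2 * real j + 1 + of_int k)"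
    by (subst prod.nat_ivl_Suc') (simp_all add: algebra_simps)
  have Q: "(\<Prod>l = 1..Suc j. 2 * real l) = (\<Prod>l = 1..j. 2 * real l) * (2 * real (Suc j))"
    by (subst prod.nat_ivl_Suc') simp_all
  define a where "a = 2 * real j + 1 + of_int k"
  define c where "c = 2 * real (Suc j)"
  have "a \<noteq> 0" "c \<noteq> 0"
    using assms by (simp_all add: a_def c_def)
  moreover have "Bessel_coeff k (Suc j) = Bessel_coeff k j * inverse a * inverse c"
    unfolding Bessel_coeff_def P Q a_def[symmetric] c_def[symmetric]
    by (simp add: inverse_mult_distrib mult_ac)
  ultimately show ?thesis
    unfolding a_def[symmetric] c_def[symmetric] by (simp add: field_simps)
qed

lemma ucand_eq_power_sum:
  "ucand \<gamma> k f x t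
    = (\<Sum>h\<le>nat (- (k + 1) div 2). Bessel_coeff k h * t ^ (2 * h) * (Lap \<gamma> ^^ h) f x)"
    (is "_ = (\<Sum>h\<le>?N. ?a h)")
proof -
  have "(\<Sum>h\<le>?N. ?a h) = ?a 0 + (\<Sum>h = 1..?N. ?a h)"
    unfolding atLeast0AtMost[symmetric] One_nat_def by (rule sum.atLeast_Suc_atMost) simp
  also have "(\<Sum>h = 1..?N. ?a h) = (\<Sum>h = 1..?N.
      (Lap \<gamma> ^^ h) f x / (\<Prod>l = 1..h. of_int (k + 2 * int l - 1)) * t ^ (2 * h) / (\<Prod>l = 1..h. 2 * real l))"
    by (simp add: Bessel_coeff_def divide_inverse inverse_mult_distrib mult_ac)
  finally show ?thesis
    by (simp add: ucand_def)
qed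

lemma solves_Cauchy_even_power_sum:
  fixes G :: "nat \<Rightarrow> real^'n \<Rightarrow> real" and b :: "nat \<Rightarrow> real"
  assumes smooth: "\<And>h. h \<le> N \<Longrightarrow> partially_differentiable 2 (G h)"
    and Lap_G: "\<And>h x. h \<le> N \<Longrightarrow> x \<in> Rplus \<Longrightarrow> Lap \<gamma> (G h) x = G (Suc h) x"
    and G_vanishes: "\<And>x. x \<in> Rplus \<Longrightarrow> G (Suc N) x = 0"
    and b_Suc: "\<And>j. j < N \<Longrightarrow> b (Suc j) * (2 * real (Suc j)) * (2 * real j + 1 + of_int k) = b j"
    and b_0: "b 0 = 1" and G_0: "\<And>x. x \<in> Rplus \<Longrightarrow> G 0 x = f x"
  shows "solves_Cauchy \<gamma> k f (\<lambda>x t. \<Sum>h\<le>N. b h * t ^ (2 * h) * G h x)"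
proof -
  let ?u = "\<lambda>x t. \<Sum>h\<le>N. b h * t ^ (2 * h) * G h x"
  have time_poly: "(\<lambda>s. ?u x s) = (\<lambda>s. \<Sum>h\<le>N. b h * G h x * s ^ (2 * h))" for x
    by (simp add: fun_eq_iff mult_ac)
  have u_deriv: "((\<lambda>s. ?u x s) has_real_derivative (\<Sum>h\<le>N. b h * G h x * real (2 * h) * s ^ (2 * h - 1))) (at s)"
    for x s
    unfolding time_poly by (rule DERIV_power_sum)
  have time_diff: "(\<lambda>s. ?u x s) differentiable (at t)" for x t
    using u_deriv real_differentiable_def by blast
  have time_diff2: "deriv (\<lambda>s. ?u x s) differentiable (at t)" for x t
    unfolding time_poly deriv_power_sum
    using DERIV_power_sum[of "\<lambda>h. b h * G h x * real (2 * h)" "\<lambda>h. 2 * h - 1"]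
    by (auto simp: real_differentiable_def)
  have space_smooth: "partially_differentiable 2 (\<lambda>y. ?u y t)" for t
    using smooth by (intro partially_differentiable_sum ballI
        partially_differentiable_mult[OF partially_differentiable_const]) auto
  then have space_diff:
      "(\<lambda>s. ?u (upd x i s) t) differentiable (at (x $ i))"
      "(\<lambda>s. partial i (\<lambda>y. ?u y t) (upd x i s)) differentiable (at (x $ i))"
    if "x \<in> Rplus" for x i t
    using that by (simp_all add: numeral_2_eq_2)
  have pde: "Bess (of_int k) (\<lambda>s. ?u x s) t = Lap \<gamma> (\<lambda>y. ?u y t) x"
    if x: "x \<in> Rplus" and t: "t > 0" for x t
  proof -
    have "Bess (of_int k) (\<lambda>s. ?u x s) t = (\<Sum>j<N. b (Suc j) * G (Suc j) x * (2 * real (Suc j))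
        * (2 * real j + 1 + of_int k) * t ^ (2 * j))"
      unfolding time_poly Bess_even_power_sum[OF t] ..
    also have "\<dots> = (\<Sum>j<N. b j * t ^ (2 * j) * G (Suc j) x)"
    proof (rule sum.cong)
      fix j assume "j \<in> {..<N}"
      have "b (Suc j) * G (Suc j) x * (2 * real (Suc j)) * (2 * real j + 1 + of_int k) * t ^ (2 * j)
          = (b (Suc j) * (2 * real (Suc j)) * (2 * real j + 1 + of_int k)) * t ^ (2 * j) * G (Suc j) x"
        by (simp only: mult_ac)
      also have "\<dots> = b j * t ^ (2 * j) * G (Suc j) x"
        using b_Suc \<open>j \<in> {..<N}\<close> by simp
      finally show "b (Suc j) * G (Suc j) x * (2 * real (Suc j)) * (2 * real j + 1 + of_int k) * t ^ (2 * j)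
          = b j * t ^ (2 * j) * G (Suc j) x" .
    qed simp
    also have "\<dots> = (\<Sum>h\<le>N. b h * t ^ (2 * h) * G (Suc h) x)"
      unfolding lessThan_Suc_atMost[symmetric] sum.lessThan_Suc using G_vanishes[OF x] by simp
    also have "\<dots> = (\<Sum>h\<le>N. b h * t ^ (2 * h) * Lap \<gamma> (G h) x)"
      using Lap_G x by simp
    also have "\<dots> = Lap \<gamma> (\<lambda>y. ?u y t) x"
      by (rule Lap_sum[symmetric]) (use smooth x in auto)
    finally show ?thesis .
  qed
  have initial_value: "?u x 0 = f x" if "x \<in> Rplus" for x
  proof -
    have "?u x 0 = (\<Sum>h\<le>N. if h = 0 then b h * G h x else 0)"
      by (rule sum.cong) simp_all
    also have "\<dots> = f x"
      using that by (simp add: b_0 G_0)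
    finally show ?thesis .
  qed
  have initial_velocity: "((\<lambda>s. ?u x s) has_real_derivative 0) (at 0 within {0..})" for x
  proof -
    have zero: "(\<Sum>h\<le>N. b h * G h x * real (2 * h) * 0 ^ (2 * h - 1)) = (0::real)"
      by (rule sum.neutral) (simp add: power_0_left)
    from u_deriv[of x 0] have "((\<lambda>s. ?u x s) has_real_derivative 0) (at 0)"
      unfolding zero .
    then show ?thesis
      by (rule has_field_derivative_at_within)
  qed
  show ?thesis
    unfolding solves_Cauchy_def
    using time_diff time_diff2 space_diff pde initial_value initial_velocity by simp
qed

theorem theorem3p3:
  fixes \<gamma> :: "real^'n" and k :: int and f :: "real^'n \<Rightarrow> real"
  assumes "\<forall>i. \<gamma> $ i > 0"
    and "k \<le> -1" and "odd k"
    and "Bpolyharmonic \<gamma> (nat ((1 - k) div 2)) f"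
    and "\<forall>i x. f (upd x i (- (x $ i))) = f x"
  shows "solves_Cauchy \<gamma> k f (ucand \<gamma> k f)"
proof -
  define N where "N = nat (- (k + 1) div 2)"
  have k_N: "k = - 2 * int N - 1" and p_N: "nat ((1 - k) div 2) = Suc N"
    using assms(2,3) by (auto simp: N_def elim!: oddE)
  have "Cev (2 * Suc N) f"
    using assms(4) unfolding Bpolyharmonic_def p_N by blast
  then have f_smooth: "partially_differentiable (2 * Suc N) f"
    using Cev_imp_partially_differentiable[of "2 * Suc N" f "[]" "2 * Suc N"] by simp
  have u_eq: "ucand \<gamma> k f = (\<lambda>x t. \<Sum>h\<le>N. Bessel_coeff k h * t ^ (2 * h) * (Lap \<gamma> ^^ h) f x)"
    by (simp add: fun_eq_iff ucand_eq_power_sum N_def)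
  show ?thesis
    unfolding u_eq
  proof (rule solves_Cauchy_even_power_sum)
    show "partially_differentiable 2 ((Lap \<gamma> ^^ h) f)" if "h \<le> N" for h
      by (rule partially_differentiable_le[of 2 "2 * (Suc N - h)"])
        (use that partially_differentiable_Lap_power[OF f_smooth] in auto)
    show "(Lap \<gamma> ^^ Suc N) f x = 0" if "x \<in> Rplus" for x
      using assms(4) that p_N by (simp add: Bpolyharmonic_def)
    show "Bessel_coeff k (Suc j) * (2 * real (Suc j)) * (2 * real j + 1 + of_int k) = Bessel_coeff k j"
      if "j < N" for j
      using that k_N by (intro Bessel_coeff_Suc) simp
  qed simp_all
qed

end
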